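(* Let $\Gamma\neq\{e\}$ be a finite subgroup of $SL(2,\mathbf{C})$, $k\in\mathbf{C}$, $c$ a complex class function on $\Gamma\setminus\{e\}$. Let $M$ be an $H_{1,k,c}(\mathbf{\Gamma}_N)$-module such that the restriction of $M$ to $\mathbf{\Gamma}_N$ is irreducible. Then the generators $x_i$, $y_i$ act by zero on $M$ for every $i=1,\dots,N$.
   Context: Let $L$ be a $2$-dimensional complex vector space with symplectic form $\omega_L$ and symplectic basis $x,y$; $\Gamma\subset Sp(L)=SL(2,\mathbf{C})$ finite. Let $V=L^{\oplus N}$, with $x_i,y_i$ (and $u_i$ for $u\in L$) the copies in the $i$-th summand. $\mathbf{\Gamma}_N=S_N\ltimes\Gamma^N$ (with $S_N$ permuting the factors) acts naturally on $V$; $\gamma_i$ denotes $\gamma\in\Gamma$ placed in the $i$-th factor of $\Gamma^N$, $s_{ij}\in S_N$ the transposition. $H_{1,k,c}(\mathbf{\Gamma}_N)$ is the quotient of the smash product $\mathbf{\Gamma}_N\sharp TV$ by the relations: for each $i$, $[x_i,y_i]=1+\frac{k}{2}\sum_{j\neq i}\sum_{\gamma\in\Gamma}s_{ij}\gamma_i\gamma_j^{-1}+\sum_{\gamma\in\Gamma\setminus\{e\}}c_\gamma\gamma_i$; and for $u,v\in L$, $i\neq j$: $[u_i,v_j]=-\frac{k}{2}\sum_{\gamma\in\Gamma}\omega_L(\gamma u,v)s_{ij}\gamma_i\gamma_j^{-1}$. *)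

theory Defs
  imports "HOL-Analysis.Analysis" "HOL-Combinatorics.Permutations" "HOL-Combinatorics.Transposition"
begin

type_synonym mat2 = "complex^2^2"
type_synonym vec2 = "complex^2"

text \<open>Elements of L are column vectors w.r.t. the symplectic basis x = (1,0), y = (0,1);
  Gamma acts on L by matrices.  The symplectic form with omega(x,y) = 1.\<close>
definition omegaL :: "vec2 \<Rightarrow> vec2 \<Rightarrow> complex" where
  "omegaL u v = u$1 * v$2 - u$2 * v$1"

definition finite_subgroup_SL2 :: "mat2 set \<Rightarrow> bool" where
  "finite_subgroup_SL2 G \<longleftrightarrow> finite G \<and> G \<subseteq> {A. det A = 1} \<and> mat 1 \<in> G
     \<and> (\<forall>A\<in>G. \<forall>B\<in>G. A ** B \<in> G) \<and> (\<forall>A\<in>G. matrix_inv A \<in> G)"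

definition class_function :: "mat2 set \<Rightarrow> (mat2 \<Rightarrow> complex) \<Rightarrow> bool" where
  "class_function G c \<longleftrightarrow>
     (\<forall>h\<in>G. \<forall>g\<in>G - {mat 1}. c (h ** g ** matrix_inv h) = c g)"

text \<open>The wreath product S_N \<ltimes> Gamma^N, indices 0..N-1.  An element (sigma, gamma)
  sends u_i (u in L, i-th copy) to (gamma_i u)_{sigma i}.\<close>
definition wreath :: "mat2 set \<Rightarrow> nat \<Rightarrow> ((nat \<Rightarrow> nat) \<times> (nat \<Rightarrow> mat2)) set" where
  "wreath G N = {(\<sigma>, \<gamma>). \<sigma> permutes {..<N} \<and> (\<forall>i<N. \<gamma> i \<in> G) \<and> (\<forall>i\<ge>N. \<gamma> i = mat 1)}"

definition wmul :: "((nat \<Rightarrow> nat) \<times> (nat \<Rightarrow> mat2)) \<Rightarrow> ((nat \<Rightarrow> nat) \<times> (nat \<Rightarrow> mat2))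
     \<Rightarrow> ((nat \<Rightarrow> nat) \<times> (nat \<Rightarrow> mat2))" where
  "wmul g h = (fst g \<circ> fst h, \<lambda>i. snd g (fst h i) ** snd h i)"

definition wone :: "(nat \<Rightarrow> nat) \<times> (nat \<Rightarrow> mat2)" where
  "wone = (id, \<lambda>_. mat 1)"

definition gam_at :: "nat \<Rightarrow> mat2 \<Rightarrow> (nat \<Rightarrow> nat) \<times> (nat \<Rightarrow> mat2)" where
  "gam_at i g = (id, (\<lambda>_. mat 1)(i := g))"

definition sgg :: "nat \<Rightarrow> nat \<Rightarrow> mat2 \<Rightarrow> (nat \<Rightarrow> nat) \<times> (nat \<Rightarrow> mat2)" where
  "sgg i j g = (Transposition.transpose i j, ((\<lambda>_. mat 1)(i := g))(j := matrix_inv g))"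

definition actL :: "(complex \<Rightarrow> 'm::ab_group_add \<Rightarrow> 'm) \<Rightarrow> (nat \<Rightarrow> 'm \<Rightarrow> 'm) \<Rightarrow> (nat \<Rightarrow> 'm \<Rightarrow> 'm)
     \<Rightarrow> nat \<Rightarrow> vec2 \<Rightarrow> 'm \<Rightarrow> 'm" where
  "actL sm X Y i u m = sm (u$1) (X i m) + sm (u$2) (Y i m)"

definition is_H_module ::
  "mat2 set \<Rightarrow> nat \<Rightarrow> complex \<Rightarrow> (mat2 \<Rightarrow> complex) \<Rightarrow> (complex \<Rightarrow> 'm::ab_group_add \<Rightarrow> 'm)
   \<Rightarrow> ((nat \<Rightarrow> nat) \<times> (nat \<Rightarrow> mat2) \<Rightarrow> 'm \<Rightarrow> 'm) \<Rightarrow> (nat \<Rightarrow> 'm \<Rightarrow> 'm) \<Rightarrow> (nat \<Rightarrow> 'm \<Rightarrow> 'm) \<Rightarrow> bool"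
  where
  "is_H_module G N k c sm \<rho> X Y \<longleftrightarrow>
     vector_space sm
   \<comment> \<open>representation of Gamma_N\<close>
   \<and> (\<forall>g\<in>wreath G N. module_hom sm sm (\<rho> g))
   \<and> (\<forall>m. \<rho> wone m = m)
   \<and> (\<forall>g\<in>wreath G N. \<forall>h\<in>wreath G N. \<forall>m. \<rho> (wmul g h) m = \<rho> g (\<rho> h m))
   \<comment> \<open>action of V\<close>
   \<and> (\<forall>i<N. module_hom sm sm (X i) \<and> module_hom sm sm (Y i))
   \<comment> \<open>smash product relation  g u_i g^{-1} = (gamma_i u)_{sigma i}\<close>
   \<and> (\<forall>g\<in>wreath G N. \<forall>i<N. \<forall>u m.
        \<rho> g (actL sm X Y i u m) = actL sm X Y (fst g i) (snd g i *v u) (\<rho> g m))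
   \<comment> \<open>[x_i, y_i] relation\<close>
   \<and> (\<forall>i<N. \<forall>m. X i (Y i m) - Y i (X i m) =
        m + sm (k / 2) (\<Sum>j\<in>{..<N} - {i}. \<Sum>g\<in>G. \<rho> (sgg i j g) m)
          + (\<Sum>g\<in>G - {mat 1}. sm (c g) (\<rho> (gam_at i g) m)))
   \<comment> \<open>[u_i, v_j] relation for i \<noteq> j\<close>
   \<and> (\<forall>i<N. \<forall>j<N. i \<noteq> j \<longrightarrow> (\<forall>u v m.
        actL sm X Y i u (actL sm X Y j v m) - actL sm X Y j v (actL sm X Y i u m) =
        sm (- k / 2) (\<Sum>g\<in>G. sm (omegaL (g *v u) v) (\<rho> (sgg i j g) m))))"

definition restriction_irreducible ::
  "mat2 set \<Rightarrow> nat \<Rightarrow> (complex \<Rightarrow> 'm::ab_group_add \<Rightarrow> 'm)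
   \<Rightarrow> ((nat \<Rightarrow> nat) \<times> (nat \<Rightarrow> mat2) \<Rightarrow> 'm \<Rightarrow> 'm) \<Rightarrow> bool" where
  "restriction_irreducible G N sm \<rho> \<longleftrightarrow>
     (UNIV :: 'm set) \<noteq> {0} \<and>
     (\<forall>W. module.subspace sm W \<and> (\<forall>g\<in>wreath G N. \<rho> g ` W \<subseteq> W)
          \<longrightarrow> W = {0} \<or> W = UNIV)"

end

(*
  The group \<Gamma> has a central element a \<noteq> 1: either -1 \<in> \<Gamma>, or every
  nonidentity element of \<Gamma> is non-scalar, so commuting is transitive through it.  Then the
  centralisers of nonidentity elements are abelian and self-normalising, the conjugates of
  such a centraliser (minus 1) cover at least half of \<Gamma>, and two disjoint such families
  cannot fit into \<Gamma> - {1} unless \<Gamma> is abelian.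

  The element z = (a, ..., a) of \<Gamma>_N is central and of finite order, so on the irreducible
  \<Gamma>_N-module M it acts by a nonzero scalar (Schur).  The relation z u_i z^-1 = (a u)_i then
  forces u_i = (a u)_i on M for all u \<in> L; as a \<noteq> 1 has finite order, tr a \<noteq> 2, so
  a - 1 is invertible and x_i, y_i act by zero.
*)

theory Submission
  imports Defs
begin

section \<open>2 x 2 complex matrices\<close>

lemma mat2_eq_iff:
  "(A::mat2) = B \<longleftrightarrow> A$1$1 = B$1$1 \<and> A$1$2 = B$1$2 \<and> A$2$1 = B$2$1 \<and> A$2$2 = B$2$2"
  by (auto simp: vec_eq_iff forall_2)

lemma mat2_mult_entries [simp]:
  fixes A B :: mat2
  shows "(A ** B)$1$1 = A$1$1 * B$1$1 + A$1$2 * B$2$1"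
    and "(A ** B)$1$2 = A$1$1 * B$1$2 + A$1$2 * B$2$2"
    and "(A ** B)$2$1 = A$2$1 * B$1$1 + A$2$2 * B$2$1"
    and "(A ** B)$2$2 = A$2$1 * B$1$2 + A$2$2 * B$2$2"
  by (simp_all add: matrix_matrix_mult_def sum_2)

lemma mat2_mat_entries [simp]:
  "(mat a :: mat2)$1$1 = a" "(mat a :: mat2)$1$2 = 0" "(mat a :: mat2)$2$1 = 0" "(mat a :: mat2)$2$2 = a"
  by (simp_all add: mat_def)

lemma mat2_mult_vec_entries:
  fixes A :: mat2
  shows "(A *v u)$1 = A$1$1 * u$1 + A$1$2 * u$2"
    and "(A *v u)$2 = A$2$1 * u$1 + A$2$2 * u$2"
  by (simp_all add: matrix_vector_mult_def sum_2)

definition adj2 :: "mat2 \<Rightarrow> mat2" where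
  "adj2 A = (\<chi> i j. if i = 1 then (if j = 1 then A$2$2 else - A$1$2)
                           else (if j = 1 then - A$2$1 else A$1$1))"

lemma adj2_entries [simp]:
  "adj2 A $1$1 = A$2$2" "adj2 A $1$2 = - A$1$2" "adj2 A $2$1 = - A$2$1" "adj2 A $2$2 = A$1$1"
  by (simp_all add: adj2_def)

lemma adj2_adj2 [simp]: "adj2 (adj2 A) = A"
  by (simp add: mat2_eq_iff)

lemma adj2_mult: "adj2 (A ** B) = adj2 B ** adj2 A"
  by (simp add: mat2_eq_iff algebra_simps)

lemma mult_adj2_right: "det A = 1 \<Longrightarrow> A ** adj2 A = mat 1"
  by (simp add: mat2_eq_iff det_2 algebra_simps)

lemma mult_adj2_left: "det A = 1 \<Longrightarrow> adj2 A ** A = mat 1"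
  by (simp add: mat2_eq_iff det_2 algebra_simps)

lemma matrix_inv_eq_adj2:
  assumes "det A = 1"
  shows "matrix_inv A = adj2 A"
proof -
  have inv: "A ** matrix_inv A = mat 1 \<and> matrix_inv A ** A = mat 1"
    unfolding matrix_inv_def
    by (rule someI[of _ "adj2 A"]) (simp add: mult_adj2_right mult_adj2_left assms)
  have "matrix_inv A = (adj2 A ** A) ** matrix_inv A"
    by (simp add: mult_adj2_left assms)
  also have "\<dots> = adj2 A ** (A ** matrix_inv A)"
    by (simp add: matrix_mul_assoc)
  also have "\<dots> = adj2 A"
    using inv by simp
  finally show ?thesis .
qed

definition tr2 :: "mat2 \<Rightarrow> complex" where
  "tr2 A = A$1$1 + A$2$2"

definition conj2 :: "mat2 \<Rightarrow> mat2 \<Rightarrow> mat2" where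
  "conj2 u a = u ** a ** adj2 u"

lemma conj2_one [simp]: "conj2 (mat 1) a = a"
  by (simp add: conj2_def mat2_eq_iff)

lemma conj2_of_one: "det u = 1 \<Longrightarrow> conj2 u (mat 1) = mat 1"
  by (simp add: conj2_def mult_adj2_right)

lemma conj2_conj2: "conj2 u (conj2 v a) = conj2 (u ** v) a"
  by (simp add: conj2_def adj2_mult matrix_mul_assoc)

lemma conj2_adj2_cancel: "det u = 1 \<Longrightarrow> conj2 (adj2 u) (conj2 u a) = a"
  by (simp add: conj2_conj2 mult_adj2_left)

lemma conj2_cancel_adj2: "det u = 1 \<Longrightarrow> conj2 u (conj2 (adj2 u) a) = a"
  by (simp add: conj2_conj2 mult_adj2_right)

lemma conj2_mult: "det u = 1 \<Longrightarrow> conj2 u (a ** b) = conj2 u a ** conj2 u b"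
  by (simp add: conj2_def matrix_mul_assoc) (simp add: matrix_mul_assoc[symmetric] mult_adj2_left)

lemma conj2_eq_iff: "det u = 1 \<Longrightarrow> conj2 u a = conj2 u b \<longleftrightarrow> a = b"
  by (metis conj2_adj2_cancel)

lemma conj2_mult_right: "det u = 1 \<Longrightarrow> conj2 u a ** u = u ** a"
  by (simp add: conj2_def matrix_mul_assoc[symmetric] mult_adj2_left)

lemma conj2_eq_self_iff: "det u = 1 \<Longrightarrow> conj2 u a = a \<longleftrightarrow> u ** a = a ** u"
  by (metis conj2_def conj2_mult_right matrix_mul_assoc matrix_mul_rid mult_adj2_right)

lemma conj2_commute_iff:
  "det u = 1 \<Longrightarrow> conj2 u a ** conj2 u b = conj2 u b ** conj2 u a \<longleftrightarrow> a ** b = b ** a"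
  by (simp add: conj2_mult[symmetric] conj2_eq_iff)

lemma adj2_conj2: "adj2 (conj2 u a) = conj2 u (adj2 a)"
  by (simp add: conj2_def adj2_mult matrix_mul_assoc)

lemma tr2_conj2: "det u = 1 \<Longrightarrow> tr2 (conj2 u a) = tr2 a"
proof -
  assume "det u = 1"
  moreover have "tr2 (conj2 u a) = det u * tr2 a"
    unfolding tr2_def conj2_def det_2 by simp algebra
  ultimately show ?thesis by simp
qed

lemma det_mat2_minus_one: "det A = 1 \<Longrightarrow> det (A - mat 1) = 2 - tr2 A"
  by (simp add: det_2 tr2_def algebra_simps)

definition scalar2 :: "mat2 \<Rightarrow> bool" where
  "scalar2 A \<longleftrightarrow> (\<exists>a. A = mat a)"

lemma scalar2_iff: "scalar2 A \<longleftrightarrow> A$1$2 = 0 \<and> A$2$1 = 0 \<and> A$1$1 = A$2$2"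
  by (auto simp: scalar2_def mat2_eq_iff intro: exI[of _ "A$1$1"])

lemma scalar2_SL2:
  assumes "scalar2 g" "det g = 1"
  shows "g = mat 1 \<or> g = - mat 1"
proof -
  obtain a where "g = mat a" using assms(1) by (auto simp: scalar2_def)
  moreover have "a * a = 1" using assms(2) \<open>g = mat a\<close> by (simp add: det_2)
  then have "a = 1 \<or> a = -1" by (metis power2_eq_1_iff power2_eq_square)
  ultimately show ?thesis by (auto simp: mat2_eq_iff)
qed

lemma SL2_involution:
  fixes g :: mat2
  assumes "g ** g = mat 1" "det g = 1"
  shows "g = mat 1 \<or> g = - mat 1"
proof -
  have sq: "g$1$1 * g$1$1 + g$1$2 * g$2$1 = 1" "g$1$2 * (g$1$1 + g$2$2) = 0"
    "g$2$1 * (g$1$1 + g$2$2) = 0" "g$2$1 * g$1$2 + g$2$2 * g$2$2 = 1"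
    using assms(1) unfolding mat2_eq_iff by (simp_all add: algebra_simps)
  have det: "g$1$1 * g$2$2 - g$1$2 * g$2$1 = 1"
    using assms(2) by (simp add: det_2)
  \<comment> \<open>a trace-zero matrix of determinant 1 squares to -1, not 1\<close>
  have tr: "g$1$1 + g$2$2 \<noteq> 0"
  proof
    assume "g$1$1 + g$2$2 = 0"
    then have "(2::complex) = 0" using sq(1) det by algebra
    then show False by simp
  qed
  then have "g$1$2 = 0" "g$2$1 = 0" using sq(2,3) by simp_all
  moreover have "(g$1$1 - g$2$2) * (g$1$1 + g$2$2) = 0"
    using sq(1,4) \<open>g$1$2 = 0\<close> by algebra
  then have "g$1$1 = g$2$2" using tr by simp
  ultimately show ?thesis
    using scalar2_SL2 assms(2) by (simp add: scalar2_iff)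
qed

lemma commutant_of_nonscalar:
  assumes "\<not> scalar2 y" "x ** y = y ** x"
  shows "\<exists>\<beta>. x$1$2 = \<beta> * y$1$2 \<and> x$2$1 = \<beta> * y$2$1 \<and> x$1$1 - x$2$2 = \<beta> * (y$1$1 - y$2$2)"
proof -
  have e1: "y$1$2 * x$2$1 = x$1$2 * y$2$1"
    using arg_cong[OF assms(2), of "\<lambda>M. M$1$1"] by (simp add: algebra_simps)
  have e2: "y$1$2 * (x$1$1 - x$2$2) = x$1$2 * (y$1$1 - y$2$2)"
    using arg_cong[OF assms(2), of "\<lambda>M. M$1$2"] by (simp add: algebra_simps)
  have e3: "y$2$1 * (x$1$1 - x$2$2) = x$2$1 * (y$1$1 - y$2$2)"
    using arg_cong[OF assms(2), of "\<lambda>M. M$2$1"] by (simp add: algebra_simps)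
  consider "y$1$2 \<noteq> 0" | "y$2$1 \<noteq> 0" | "y$1$1 - y$2$2 \<noteq> 0"
    using assms(1) by (auto simp: scalar2_iff)
  then show ?thesis
  proof cases
    case 1
    then show ?thesis using e1 e2
      by (intro exI[of _ "x$1$2 / y$1$2"]) (simp add: field_simps)
  next
    case 2
    then show ?thesis using e1 e3
      by (intro exI[of _ "x$2$1 / y$2$1"]) (simp add: field_simps)
  next
    case 3
    then show ?thesis using e2 e3
      by (intro exI[of _ "(x$1$1 - x$2$2) / (y$1$1 - y$2$2)"]) (simp add: field_simps)
  qed
qed

lemma commute_trans_nonscalar:
  assumes "\<not> scalar2 y" "x ** y = y ** x" "z ** y = y ** z"
  shows "x ** z = z ** x"
proof -
  obtain b where b: "x$1$2 = b * y$1$2" "x$2$1 = b * y$2$1" "x$1$1 = x$2$2 + b * (y$1$1 - y$2$2)"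
    using commutant_of_nonscalar[OF assms(1,2)] by (auto simp: algebra_simps)
  obtain c where c: "z$1$2 = c * y$1$2" "z$2$1 = c * y$2$1" "z$1$1 = z$2$2 + c * (y$1$1 - y$2$2)"
    using commutant_of_nonscalar[OF assms(1,3)] by (auto simp: algebra_simps)
  show ?thesis
    unfolding mat2_eq_iff mat2_mult_entries b c by (simp add: algebra_simps)
qed

lemma commuting_same_trace_det:
  assumes "\<not> scalar2 a" "b ** a = a ** b" "tr2 b = tr2 a" "det b = 1" "det a = 1"
    and "(tr2 a)^2 \<noteq> 4"
  shows "b = a \<or> b = adj2 a"
proof -
  obtain \<beta> where b: "b$1$2 = \<beta> * a$1$2" "b$2$1 = \<beta> * a$2$1" "b$1$1 - b$2$2 = \<beta> * (a$1$1 - a$2$2)"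
    using commutant_of_nonscalar[OF assms(1,2)] by blast
  have tr: "b$1$1 + b$2$2 = a$1$1 + a$2$2" using assms(3) by (simp add: tr2_def)
  have b11: "b$1$1 = ((a$1$1 + a$2$2) + \<beta> * (a$1$1 - a$2$2)) / 2"
    using b(3) tr by (simp add: field_simps) algebra
  have b22: "b$2$2 = ((a$1$1 + a$2$2) - \<beta> * (a$1$1 - a$2$2)) / 2"
    using b(3) tr by (simp add: field_simps) algebra
  have "(1 - \<beta>^2) * ((a$1$1 + a$2$2)^2 - 4) = 0"
    using assms(4,5) unfolding det_2 b11 b22 b(1,2) by (simp add: field_simps power2_eq_square)
  moreover have "(a$1$1 + a$2$2)^2 - 4 \<noteq> 0" using assms(6) by (simp add: tr2_def)
  ultimately have "\<beta> = 1 \<or> \<beta> = -1" by (simp add: power2_eq_1_iff)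
  then show ?thesis
    using b b11 b22 by (auto simp: mat2_eq_iff field_simps)
qed

fun mpow :: "mat2 \<Rightarrow> nat \<Rightarrow> mat2" where
  "mpow g 0 = mat 1"
| "mpow g (Suc k) = g ** mpow g k"

lemma mpow_add: "mpow g (a + b) = mpow g a ** mpow g b"
  by (induction a) (simp_all add: matrix_mul_assoc)

lemma mpow_double: "mpow g (2 * k) = mpow (g ** g) k"
  by (induction k) (simp_all add: matrix_mul_assoc)

lemma det_mpow: "det g = 1 \<Longrightarrow> det (mpow g k) = 1"
  by (induction k) (simp_all add: det_mul det_I)

text \<open>By Cayley-Hamilton (g - 1)^2 = 0, so g^k = 1 + k (g - 1).\<close>
lemma mpow_unipotent:
  assumes "det g = 1" "tr2 g = 2"
  shows "mpow g k $1$1 = 1 + of_nat k * (g$1$1 - 1) \<and> mpow g k $1$2 = of_nat k * g$1$2 \<and>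
         mpow g k $2$1 = of_nat k * g$2$1 \<and> mpow g k $2$2 = 1 + of_nat k * (g$2$2 - 1)"
proof (induction k)
  case 0
  then show ?case by simp
next
  case (Suc k)
  have "g$1$1 * g$2$2 - g$1$2 * g$2$1 = 1" "g$1$1 + g$2$2 = 2"
    using assms by (simp_all add: det_2 tr2_def)
  with Suc show ?case by (simp add: algebra_simps) algebra
qed

lemma finite_order_trace_2_eq_one:
  assumes "det g = 1" "tr2 g = 2" "mpow g k = mat 1" "k > 0"
  shows "g = mat 1"
  using mpow_unipotent[OF assms(1,2), of k] assms(3,4) by (simp add: mat2_eq_iff)

lemma finite_order_trace_minus_2_eq_minus_one:
  assumes "det g = 1" "tr2 g = -2" "mpow g k = mat 1" "k > 0"
  shows "g = - mat 1"
proof -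
  have "- g ** - g = g ** g"
    by (simp add: mat2_eq_iff)
  then have "mpow (- g) (2 * k) = mpow g (2 * k)"
    by (simp add: mpow_double)
  also have "\<dots> = mat 1"
    using assms(3) mpow_add[of g k k] by (simp add: mult_2)
  finally have "mpow (- g) (2 * k) = mat 1" .
  moreover have "det (- g) = 1" using assms(1) by (simp add: det_2)
  moreover have "tr2 (- g) = 2" using assms(2) by (simp add: tr2_def) algebra
  ultimately have "- g = mat 1"
    using finite_order_trace_2_eq_one assms(4) by simp
  then show ?thesis by (metis minus_minus)
qed

section \<open>Finite subgroups of SL(2, C)\<close>

locale finite_SL2_subgroup =
  fixes G :: "mat2 set"
  assumes finite_subgroup: "finite_subgroup_SL2 G"
begin

lemma finite_G: "finite G"
  using finite_subgroup by (simp add: finite_subgroup_SL2_def)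

lemma one_mem: "mat 1 \<in> G"
  using finite_subgroup by (simp add: finite_subgroup_SL2_def)

lemma mult_mem: "a \<in> G \<Longrightarrow> b \<in> G \<Longrightarrow> a ** b \<in> G"
  using finite_subgroup by (simp add: finite_subgroup_SL2_def)

lemma det_eq_1: "a \<in> G \<Longrightarrow> det a = 1"
  using finite_subgroup by (auto simp: finite_subgroup_SL2_def)

lemma adj2_mem: "a \<in> G \<Longrightarrow> adj2 a \<in> G"
  using finite_subgroup det_eq_1 matrix_inv_eq_adj2 by (fastforce simp: finite_subgroup_SL2_def)

lemma conj2_mem: "u \<in> G \<Longrightarrow> a \<in> G \<Longrightarrow> conj2 u a \<in> G"
  by (simp add: conj2_def mult_mem adj2_mem)

lemma mpow_mem: "a \<in> G \<Longrightarrow> mpow a k \<in> G"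
  by (induction k) (simp_all add: one_mem mult_mem)

lemma finite_order:
  assumes "a \<in> G"
  obtains k where "k > 0" "mpow a k = mat 1"
proof -
  have "range (mpow a) \<subseteq> G" using mpow_mem assms by auto
  then have "\<not> inj (mpow a)"
    using finite_G finite_subset finite_imageD by (metis infinite_UNIV_nat)
  then obtain i j where ij: "i < j" "mpow a i = mpow a j"
    unfolding inj_def by (metis nat_neq_iff)
  then have "mpow a (j - i) ** mpow a i = mpow a i"
    using mpow_add[of a "j - i" i] by simp
  then have "mpow a (j - i) ** (mpow a i ** adj2 (mpow a i)) = mpow a i ** adj2 (mpow a i)"
    by (simp add: matrix_mul_assoc)
  then have "mpow a (j - i) = mat 1"
    using mult_adj2_right det_mpow det_eq_1 assms by simp
  then show ?thesis using that[of "j - i"] ij(1) by simp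
qed

lemma trace_ne_2: "a \<in> G \<Longrightarrow> a \<noteq> mat 1 \<Longrightarrow> tr2 a \<noteq> 2"
  by (metis finite_order finite_order_trace_2_eq_one det_eq_1)

lemma trace_ne_minus_2: "a \<in> G \<Longrightarrow> a \<noteq> - mat 1 \<Longrightarrow> tr2 a \<noteq> -2"
  by (metis finite_order finite_order_trace_minus_2_eq_minus_one det_eq_1)

end

locale SL2_subgroup_without_minus_one = finite_SL2_subgroup +
  assumes minus_one_not_mem: "- mat 1 \<notin> G"
begin

lemma nonscalar: "a \<in> G \<Longrightarrow> a \<noteq> mat 1 \<Longrightarrow> \<not> scalar2 a"
  using scalar2_SL2 det_eq_1 minus_one_not_mem by blast

lemma trace_sq_ne_4:
  assumes "a \<in> G" "a \<noteq> mat 1"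
  shows "(tr2 a)^2 \<noteq> 4"
proof
  assume "(tr2 a)^2 = 4"
  then have "(tr2 a - 2) * (tr2 a + 2) = 0" by (simp add: algebra_simps power2_eq_square)
  then have "tr2 a = 2 \<or> tr2 a = -2" by (auto simp: eq_neg_iff_add_eq_0)
  moreover have "a \<noteq> - mat 1" using assms minus_one_not_mem by auto
  ultimately show False using trace_ne_2 trace_ne_minus_2 assms by blast
qed

lemma commute_trans:
  "b \<in> G \<Longrightarrow> b \<noteq> mat 1 \<Longrightarrow> a ** b = b ** a \<Longrightarrow> c ** b = b ** c \<Longrightarrow> a ** c = c ** a"
  using commute_trans_nonscalar nonscalar by blast

lemma commute_if_conj2_commute:
  assumes b: "b \<in> G" "b \<noteq> mat 1" and u: "u \<in> G"
    and comm: "conj2 u b ** b = b ** conj2 u b"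
  shows "u ** b = b ** u"
proof -
  have det_u: "det u = 1" using det_eq_1 u .
  have "conj2 u b = b \<or> conj2 u b = adj2 b"
    using commuting_same_trace_det[OF nonscalar[OF b] comm tr2_conj2 det_eq_1 det_eq_1 trace_sq_ne_4]
    by (simp add: det_u conj2_mem b u)
  then show ?thesis
  proof
    assume "conj2 u b = b"
    then show ?thesis using conj2_eq_self_iff det_u by blast
  next
    assume inv: "conj2 u b = adj2 b"
    then have "conj2 (u ** u) b = b"
      by (simp add: conj2_conj2[symmetric] adj2_conj2[symmetric])
    then have uu_b: "(u ** u) ** b = b ** (u ** u)"
      using conj2_eq_self_iff det_u by (simp add: det_mul)
    show ?thesis
    proof (cases "u ** u = mat 1")
      case True
      then have "u = mat 1"
        using SL2_involution det_u u minus_one_not_mem by blast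
      then show ?thesis by simp
    next
      case False
      show ?thesis
        using commute_trans[OF mult_mem[OF u u] False matrix_mul_assoc uu_b[symmetric]] .
    qed
  qed
qed

definition centralizer :: "mat2 \<Rightarrow> mat2 set" where
  "centralizer g = {h \<in> G. h ** g = g ** h}"

definition centralizer_conjugates :: "mat2 \<Rightarrow> mat2 set" where
  "centralizer_conjugates g = case_prod conj2 ` (G \<times> (centralizer g - {mat 1}))"

lemma finite_centralizer: "finite (centralizer g)"
  using finite_G by (simp add: centralizer_def)

lemma centralizer_commute:
  "g \<in> G \<Longrightarrow> g \<noteq> mat 1 \<Longrightarrow> a \<in> centralizer g \<Longrightarrow> b \<in> centralizer g \<Longrightarrow> a ** b = b ** a"
  unfolding centralizer_def by (blast intro: commute_trans)

lemma card_centralizer_ge_2: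
  assumes "g \<in> G" "g \<noteq> mat 1"
  shows "card (centralizer g) \<ge> 2"
proof -
  have "{mat 1, g} \<subseteq> centralizer g"
    using assms one_mem by (auto simp: centralizer_def)
  moreover have "card {mat 1, g} = 2" using assms(2) by simp
  ultimately show ?thesis
    using card_mono[OF finite_centralizer] by metis
qed

lemma centralizer_conjugates_subset: "centralizer_conjugates g \<subseteq> G - {mat 1}"
proof
  fix y assume "y \<in> centralizer_conjugates g"
  then obtain h a where h: "h \<in> G" and a: "a \<in> centralizer g" "a \<noteq> mat 1"
    and y: "y = conj2 h a"
    by (auto simp: centralizer_conjugates_def)
  have "y \<in> G" using h a by (simp add: y conj2_mem centralizer_def)
  moreover have "y \<noteq> mat 1"
    using conj2_eq_iff[of h a "mat 1"] conj2_of_one det_eq_1 h a by (simp add: y)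
  ultimately show "y \<in> G - {mat 1}" by simp
qed

lemma finite_centralizer_conjugates: "finite (centralizer_conjugates g)"
  using finite_subset[OF centralizer_conjugates_subset] finite_G by blast

lemma centralizer_conjugates_fibre:
  assumes g: "g \<in> G" "g \<noteq> mat 1" and h: "h \<in> G" and a: "a \<in> centralizer g - {mat 1}"
  shows "{p \<in> G \<times> (centralizer g - {mat 1}). case_prod conj2 p = conj2 h a}
    = (\<lambda>u. (h ** u, a)) ` centralizer g" (is "?F = _")
proof (intro equalityI subsetI)
  fix p assume "p \<in> (\<lambda>u. (h ** u, a)) ` centralizer g"
  then obtain u where u: "u \<in> G" "u ** g = g ** u" and p: "p = (h ** u, a)"
    by (auto simp: centralizer_def)
  have "u ** a = a ** u"
    using a u centralizer_commute[OF g] by (simp add: centralizer_def)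
  then have "conj2 u a = a"
    using u conj2_eq_self_iff det_eq_1 by blast
  then have "conj2 (h ** u) a = conj2 h a"
    by (simp add: conj2_conj2[symmetric])
  then show "p \<in> ?F"
    using a u h by (simp add: p mult_mem)
next
  fix p assume "p \<in> ?F"
  then obtain k b where p: "p = (k, b)" and k: "k \<in> G" and b: "b \<in> centralizer g" "b \<noteq> mat 1"
    and eq: "conj2 k b = conj2 h a"
    by auto
  define u where "u = adj2 h ** k"
  have u: "u \<in> G" using h k by (simp add: u_def mult_mem adj2_mem)
  have ub_a: "conj2 u b = a"
    using eq h by (simp add: u_def conj2_conj2[symmetric] conj2_adj2_cancel det_eq_1)
  moreover have "a ** b = b ** a"
    using a b centralizer_commute[OF g] by simp
  ultimately have ub: "u ** b = b ** u"
    using commute_if_conj2_commute b u by (simp add: centralizer_def)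
  then have "a = b"
    using ub_a conj2_eq_self_iff det_eq_1 u by blast
  moreover have "u ** g = g ** u"
    using commute_trans[of b u g] u ub b by (simp add: centralizer_def)
  moreover have "k = h ** u"
    using h by (simp add: u_def matrix_mul_assoc mult_adj2_right det_eq_1)
  ultimately show "p \<in> (\<lambda>u. (h ** u, a)) ` centralizer g"
    using u by (auto simp: p centralizer_def)
qed

lemma card_centralizer_conjugates:
  assumes g: "g \<in> G" "g \<noteq> mat 1"
  shows "card (centralizer_conjugates g) * card (centralizer g)
    = card G * (card (centralizer g) - 1)"
proof -
  let ?C = "centralizer g" and ?I = "centralizer_conjugates g"
  let ?S = "G \<times> (?C - {mat 1})"
  have "card G * (card ?C - 1) = card ?S"
    using one_mem finite_centralizer by (simp add: card_cartesian_product centralizer_def)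
  also have "\<dots> = (\<Sum>y\<in>?I. card {p \<in> ?S. case_prod conj2 p = y})"
    using sum.group[of ?S ?I "case_prod conj2" "\<lambda>_. 1::nat"] finite_G finite_centralizer
    by (simp add: centralizer_conjugates_def)
  also have "\<dots> = (\<Sum>y\<in>?I. card ?C)"
  proof (rule sum.cong[OF refl])
    fix y assume "y \<in> ?I"
    then obtain h a where h: "h \<in> G" and a: "a \<in> ?C - {mat 1}" and y: "y = conj2 h a"
      by (auto simp: centralizer_conjugates_def)
    have "inj_on (\<lambda>u. (h ** u, a)) ?C"
      by (rule inj_onI) (metis Pair_inject det_eq_1 h matrix_mul_assoc matrix_mul_lid mult_adj2_left)
    then show "card {p \<in> ?S. case_prod conj2 p = y} = card ?C"
      unfolding y centralizer_conjugates_fibre[OF g h a] by (rule card_image)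
  qed
  finally show ?thesis by simp
qed

lemma centralizer_conjugates_disjoint:
  assumes g0: "g0 \<in> G" "g0 \<noteq> mat 1" and g1: "g1 \<in> G" "g1 \<noteq> mat 1"
    and not_conj: "g1 \<notin> centralizer_conjugates g0"
  shows "centralizer_conjugates g0 \<inter> centralizer_conjugates g1 = {}"
proof (rule ccontr)
  assume "centralizer_conjugates g0 \<inter> centralizer_conjugates g1 \<noteq> {}"
  then obtain h a k b where h: "h \<in> G" and a: "a \<in> centralizer g0" "a \<noteq> mat 1"
    and k: "k \<in> G" and b: "b \<in> centralizer g1"
    and eq: "conj2 h a = conj2 k b"
    by (auto simp: centralizer_conjugates_def)
  define u where "u = adj2 k ** h"
  have u: "u \<in> G" "det u = 1" using h k by (simp_all add: u_def mult_mem adj2_mem det_eq_1)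
  have "conj2 u a = b"
    using eq k by (simp add: u_def conj2_conj2[symmetric] conj2_adj2_cancel det_eq_1)
  \<comment> \<open>conjugating g1 back by u^-1 gives a nonidentity element of the centralizer of g0\<close>
  define a' where "a' = conj2 (adj2 u) g1"
  have "a' \<in> G" using u g1 by (simp add: a'_def conj2_mem adj2_mem)
  moreover have "a' \<noteq> mat 1"
    using u g1 conj2_cancel_adj2 conj2_of_one by (metis a'_def)
  moreover have "conj2 u a' ** conj2 u a = conj2 u a ** conj2 u a'"
    using b \<open>conj2 u a = b\<close> u by (simp add: a'_def conj2_cancel_adj2 centralizer_def)
  then have "a' ** a = a ** a'"
    using conj2_commute_iff u(2) by blast
  then have "a' ** g0 = g0 ** a'"
    using commute_trans[of a a' g0] a by (simp add: centralizer_def)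
  moreover have "conj2 u a' = g1"
    using u by (simp add: a'_def conj2_cancel_adj2)
  ultimately have "g1 \<in> centralizer_conjugates g0"
    using u unfolding centralizer_conjugates_def centralizer_def by force
  then show False using not_conj by simp
qed

lemma card_centralizer_conjugates_lower:
  assumes "g \<in> G" "g \<noteq> mat 1"
  shows "card G \<le> 2 * card (centralizer_conjugates g)"
proof -
  let ?c = "card (centralizer g)" and ?i = "card (centralizer_conjugates g)"
  have c: "?c \<ge> 2" using card_centralizer_ge_2[OF assms] .
  then have "card G * 2 \<le> card G * ?c" by (rule mult_le_mono2)
  then have "card G * ?c \<le> 2 * (card G * (?c - 1))"
    by (simp only: diff_mult_distrib2 mult_1_right)
  also have "\<dots> = (2 * ?i) * ?c"
    using card_centralizer_conjugates[OF assms] by simp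
  finally show ?thesis using c by simp
qed

lemma card_centralizer_conjugates_upper:
  assumes "g \<in> G" "g \<noteq> mat 1" "centralizer g \<noteq> G"
  shows "card (centralizer_conjugates g) < card G - 1"
proof -
  let ?c = "card (centralizer g)" and ?i = "card (centralizer_conjugates g)"
  have "centralizer g \<subset> G" using assms(3) by (auto simp: centralizer_def)
  then have "?c < card G" using finite_G by (rule psubset_card_mono[rotated])
  moreover have "?c \<ge> 2" using card_centralizer_ge_2[OF assms(1,2)] .
  moreover have "?c \<le> card G * ?c" "card G \<le> card G * ?c"
    using \<open>?c < card G\<close> \<open>?c \<ge> 2\<close> by simp_all
  ultimately have "card G * (?c - 1) < (card G - 1) * ?c"
    by (simp only: diff_mult_distrib diff_mult_distrib2 mult_1_right mult_1 mult.commute)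
  then have "?i * ?c < (card G - 1) * ?c"
    using card_centralizer_conjugates[OF assms(1,2)] by simp
  then show ?thesis by simp
qed

theorem abelian:
  assumes a: "a \<in> G" and b: "b \<in> G"
  shows "a ** b = b ** a"
proof (rule ccontr)
  assume noncomm: "a ** b \<noteq> b ** a"
  then have a1: "a \<noteq> mat 1" by auto
  have "b \<notin> centralizer a" using noncomm by (auto simp: centralizer_def)
  then have "centralizer a \<noteq> G" using b by blast
  then have "card (centralizer_conjugates a) < card (G - {mat 1})"
    using card_centralizer_conjugates_upper[OF a a1] one_mem finite_G by simp
  then have "\<not> G - {mat 1} \<subseteq> centralizer_conjugates a"
    using card_mono[OF finite_centralizer_conjugates] by (meson not_le)
  then obtain g where g: "g \<in> G" "g \<noteq> mat 1" "g \<notin> centralizer_conjugates a"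
    by blast
  have "card (centralizer_conjugates a) + card (centralizer_conjugates g)
      = card (centralizer_conjugates a \<union> centralizer_conjugates g)"
    using centralizer_conjugates_disjoint[OF a a1 g]
    by (simp add: card_Un_disjoint finite_centralizer_conjugates)
  also have "\<dots> \<le> card (G - {mat 1})"
    using centralizer_conjugates_subset by (intro card_mono) (simp_all add: finite_G)
  also have "\<dots> = card G - 1"
    using one_mem finite_G by simp
  finally have "card (centralizer_conjugates a) + card (centralizer_conjugates g) \<le> card G - 1" .
  moreover have "card G \<le> 2 * card (centralizer_conjugates a)"
    using card_centralizer_conjugates_lower[OF a a1] .
  moreover have "card G \<le> 2 * card (centralizer_conjugates g)"
    using card_centralizer_conjugates_lower[OF g(1,2)] .
  moreover have "card G > 0"
    using one_mem finite_G card_gt_0_iff by blast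
  ultimately show False by linarith
qed

end

lemma (in finite_SL2_subgroup) nontrivial_center:
  assumes "G \<noteq> {mat 1}"
  obtains c where "c \<in> G" "c \<noteq> mat 1" "\<And>h. h \<in> G \<Longrightarrow> c ** h = h ** c"
proof (cases "- mat 1 \<in> G")
  case True
  moreover have "- mat 1 \<noteq> (mat 1 :: mat2)" "\<And>h::mat2. - mat 1 ** h = h ** - mat 1"
    by (simp_all add: mat2_eq_iff)
  ultimately show ?thesis using that by blast
next
  case False
  then interpret SL2_subgroup_without_minus_one G
    by unfold_locales
  obtain c where "c \<in> G" "c \<noteq> mat 1" using assms one_mem by blast
  then show ?thesis using that abelian by blast
qed

section \<open>Modules over H_{1,k,c}(\<Gamma>_N)\<close>

lemma primitive_root_of_unity:
  assumes "n > 0"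
  obtains \<omega> :: complex where "\<And>k. \<omega> ^ k = 1 \<longleftrightarrow> n dvd k"
proof
  fix k
  have "exp (2 * of_real pi * \<i> / of_nat n) ^ k = exp (2 * of_real pi * \<i> * of_nat k / of_nat n)"
    by (simp flip: exp_of_nat_mult) (simp add: field_simps)
  then show "exp (2 * of_real pi * \<i> / of_nat n) ^ k = 1 \<longleftrightarrow> n dvd k"
    using complex_root_unity_eq_1[of n k] assms by simp
qed

text \<open>If T^n = 1 and m0 \<noteq> 0, then for a primitive n-th root of unity \<omega> the vectors
  P \<mu> = (\<Sum>k<n. \<mu>^-k T^k m0), \<mu> = \<omega>^j, are eigenvectors (or 0) and sum to n m0.\<close>
lemma periodic_operator_eigenvector:
  fixes sm :: "complex \<Rightarrow> 'm::ab_group_add \<Rightarrow> 'm" and T :: "'m \<Rightarrow> 'm" and m0 :: 'm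
  assumes "vector_space sm" and lin: "module_hom sm sm T" and n: "n > 0"
    and per: "\<And>m. (T ^^ n) m = m" and nz: "m0 \<noteq> 0"
  obtains \<mu> m where "m \<noteq> 0" "T m = sm \<mu> m" "\<mu> \<noteq> 0"
proof -
  interpret V: vector_space sm by fact
  obtain \<omega> :: complex where \<omega>: "\<And>k. \<omega> ^ k = 1 \<longleftrightarrow> n dvd k"
    using primitive_root_of_unity n by blast
  define P where "P \<mu> = (\<Sum>k<n. sm (inverse \<mu> ^ k) ((T ^^ k) m0))" for \<mu>
  have eigen: "T (P \<mu>) = sm \<mu> (P \<mu>)" if \<mu>: "\<mu> ^ n = 1" for \<mu>
  proof -
    have "\<mu> \<noteq> 0" using \<mu> n by (metis power_0_left not_gr0 zero_neq_one)
    define f where "f k = sm (\<mu> * inverse \<mu> ^ k) ((T ^^ k) m0)" for k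
    have "T (P \<mu>) = (\<Sum>k<n. sm (inverse \<mu> ^ k) ((T ^^ Suc k) m0))"
      unfolding P_def by (simp add: module_hom.sum[OF lin] module_hom.scale[OF lin])
    also have "\<dots> = (\<Sum>k<n. f (Suc k))"
      unfolding f_def using \<open>\<mu> \<noteq> 0\<close> by (intro sum.cong refl) (simp add: field_simps)
    also have "\<dots> = (\<Sum>k<n. f k) + f n - f 0"
      using sum.lessThan_Suc_shift[of f n] sum.lessThan_Suc[of f n] by (simp add: algebra_simps)
    also have "f n = f 0" unfolding f_def using \<mu> per by (simp add: power_inverse)
    also have "(\<Sum>k<n. f k) = sm \<mu> (P \<mu>)"
      unfolding f_def P_def by (simp add: V.scale_sum_right)
    finally show ?thesis by simp
  qed
  have geometric: "(\<Sum>j<n. (inverse (\<omega> ^ k)) ^ j) = (if k = 0 then of_nat n else 0)" if "k < n" for k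
  proof (cases "k = 0")
    case False
    then have "inverse (\<omega> ^ k) \<noteq> 1" "(inverse (\<omega> ^ k)) ^ n = 1"
      using \<omega>[of k] \<omega>[of "k * n"] that by (auto simp: power_inverse power_mult[symmetric] dest: dvd_imp_le)
    then show ?thesis using False by (simp add: sum_gp_strict)
  qed simp
  have "(\<Sum>j<n. P (\<omega> ^ j)) = (\<Sum>k<n. sm (\<Sum>j<n. (inverse (\<omega> ^ k)) ^ j) ((T ^^ k) m0))"
    unfolding P_def
    by (subst sum.swap) (simp add: V.scale_sum_left power_inverse power_mult[symmetric] mult.commute)
  also have "\<dots> = (\<Sum>k<n. if k = 0 then sm (of_nat n) m0 else 0)"
    by (intro sum.cong refl) (simp add: geometric)
  also have "\<dots> = sm (of_nat n) m0"
    using n by (simp add: sum.delta')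
  also have "\<dots> \<noteq> 0" using n nz by simp
  finally obtain j where "P (\<omega> ^ j) \<noteq> 0"
    by (metis (no_types, lifting) sum.neutral)
  moreover have "T (P (\<omega> ^ j)) = sm (\<omega> ^ j) (P (\<omega> ^ j))"
    using \<omega>[of "j * n"] by (intro eigen) (simp add: power_mult[symmetric] mult.commute)
  moreover have "\<omega> ^ j \<noteq> 0" using \<omega>[of n] n by (cases n) auto
  ultimately show ?thesis using that by blast
qed

lemma is_H_moduleD:
  assumes "is_H_module G N k c sm \<rho> X Y"
  shows "vector_space sm"
    and "g \<in> wreath G N \<Longrightarrow> module_hom sm sm (\<rho> g)"
    and "\<rho> wone m = m"
    and "g \<in> wreath G N \<Longrightarrow> h \<in> wreath G N \<Longrightarrow> \<rho> (wmul g h) m = \<rho> g (\<rho> h m)"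
    and "i < N \<Longrightarrow> module_hom sm sm (X i)"
    and "i < N \<Longrightarrow> module_hom sm sm (Y i)"
    and "g \<in> wreath G N \<Longrightarrow> i < N \<Longrightarrow>
      \<rho> g (actL sm X Y i u m) = actL sm X Y (fst g i) (snd g i *v u) (\<rho> g m)"
  using assms by (simp_all add: is_H_module_def)

lemma commuting_periodic_operator_is_scalar:
  fixes T :: "'m::ab_group_add \<Rightarrow> 'm"
  assumes irr: "restriction_irreducible G N sm \<rho>" and "vector_space sm"
    and hom: "\<And>g. g \<in> wreath G N \<Longrightarrow> module_hom sm sm (\<rho> g)"
    and lin: "module_hom sm sm T" and "n > 0" and "\<And>m. (T ^^ n) m = m"
    and comm: "\<And>g m. g \<in> wreath G N \<Longrightarrow> \<rho> g (T m) = T (\<rho> g m)"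
  obtains \<mu> where "\<mu> \<noteq> 0" "\<And>m. T m = sm \<mu> m"
proof -
  interpret V: vector_space sm by fact
  obtain m0 :: 'm where "m0 \<noteq> 0"
    using irr by (auto simp: restriction_irreducible_def)
  then obtain \<mu> m1 where m1: "m1 \<noteq> 0" "T m1 = sm \<mu> m1" and "\<mu> \<noteq> 0"
    using periodic_operator_eigenvector assms by metis
  define W where "W = {m. T m = sm \<mu> m}"
  have "V.subspace W"
    unfolding W_def V.subspace_def
    by (simp add: module_hom.add[OF lin] module_hom.scale[OF lin] module_hom.zero[OF lin]
        V.scale_right_distrib V.scale_left_commute)
  moreover have "\<forall>g\<in>wreath G N. \<rho> g ` W \<subseteq> W"
  proof (intro ballI subsetI)
    fix g x assume g: "g \<in> wreath G N" and "x \<in> \<rho> g ` W"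
    then obtain m where "T m = sm \<mu> m" "x = \<rho> g m" by (auto simp: W_def)
    then show "x \<in> W"
      using comm[OF g, of m, symmetric] module_hom.scale[OF hom[OF g]] by (simp add: W_def)
  qed
  moreover have "W \<noteq> {0}" using m1 by (auto simp: W_def)
  ultimately have "W = UNIV"
    using irr by (auto simp: restriction_irreducible_def)
  then show ?thesis using that \<open>\<mu> \<noteq> 0\<close> by (auto simp: W_def)
qed

definition wdiag :: "nat \<Rightarrow> mat2 \<Rightarrow> (nat \<Rightarrow> nat) \<times> (nat \<Rightarrow> mat2)" where
  "wdiag N a = (id, \<lambda>i. if i < N then a else mat 1)"

lemma wdiag_mem_wreath: "a \<in> G \<Longrightarrow> wdiag N a \<in> wreath G N"
  by (simp add: wdiag_def wreath_def)

lemma wmul_wdiag: "wmul (wdiag N a) (wdiag N b) = wdiag N (a ** b)"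
  by (simp add: wdiag_def wmul_def fun_eq_iff)

lemma wdiag_one: "wdiag N (mat 1) = wone"
  by (simp add: wdiag_def wone_def fun_eq_iff)

lemma wdiag_central:
  assumes central: "\<And>h. h \<in> G \<Longrightarrow> a ** h = h ** a" and g: "g \<in> wreath G N"
  shows "wmul g (wdiag N a) = wmul (wdiag N a) g"
proof -
  obtain \<sigma> \<gamma> where g_eq: "g = (\<sigma>, \<gamma>)" by (cases g)
  have \<sigma>: "\<sigma> permutes {..<N}" and \<gamma>: "\<And>i. i < N \<Longrightarrow> \<gamma> i \<in> G" "\<And>i. i \<ge> N \<Longrightarrow> \<gamma> i = mat 1"
    using g by (auto simp: g_eq wreath_def)
  have "\<gamma> i ** (if i < N then a else mat 1) = (if \<sigma> i < N then a else mat 1) ** \<gamma> i" for i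
  proof (cases "i < N")
    case True
    then show ?thesis using permutes_in_image[OF \<sigma>, of i] central[OF \<gamma>(1)] by simp
  next
    case False
    then show ?thesis using permutes_not_in[OF \<sigma>, of i] \<gamma>(2)[of i] by simp
  qed
  then show ?thesis by (simp add: g_eq wdiag_def wmul_def fun_eq_iff)
qed

lemma (in finite_SL2_subgroup) rep_wdiag_mpow:
  assumes H: "is_H_module G N k c sm \<rho> X Y" and a: "a \<in> G"
  shows "\<rho> (wdiag N (mpow a j)) m = (\<rho> (wdiag N a) ^^ j) m"
proof (induction j arbitrary: m)
  case 0
  then show ?case using is_H_moduleD(3)[OF H] by (simp add: wdiag_one)
next
  case (Suc j)
  have "\<rho> (wdiag N (mpow a (Suc j))) m = \<rho> (wdiag N a) (\<rho> (wdiag N (mpow a j)) m)"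
    using is_H_moduleD(4)[OF H] wdiag_mem_wreath a mpow_mem by (simp add: wmul_wdiag[symmetric])
  then show ?case using Suc by simp
qed

lemma (in vector_space) eq_zero_if_det_nonzero:
  assumes "scale a p + scale b q = 0" "scale c p + scale d q = 0" "a * d - b * c \<noteq> 0"
  shows "p = 0 \<and> q = 0"
proof -
  have "scale (a * d - b * c) p = scale d (scale a p + scale b q) - scale b (scale c p + scale d q)"
    and "scale (a * d - b * c) q = scale a (scale c p + scale d q) - scale c (scale a p + scale b q)"
    by (simp_all add: scale_right_distrib scale_left_diff_distrib algebra_simps)
  then show ?thesis using assms by simp
qed

text \<open>The smash-product relation for (a, ..., a) gives u_i = (a u)_i on M, so (a - 1)^T kills
  (x_i, y_i), and det (a - 1) = 2 - tr a.\<close>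
lemma generators_vanish_if_wdiag_scalar:
  assumes H: "is_H_module G N k c sm \<rho> X Y" and i: "i < N" and a: "a \<in> G"
    and det: "det a = 1" and tr: "tr2 a \<noteq> 2"
    and scalar: "\<And>m. \<rho> (wdiag N a) m = sm \<mu> m" and "\<mu> \<noteq> 0"
  shows "X i m = 0 \<and> Y i m = 0"
proof -
  interpret V: vector_space sm using is_H_moduleD(1)[OF H] .
  have X: "module_hom sm sm (X i)" and Y: "module_hom sm sm (Y i)"
    using is_H_moduleD(5,6)[OF H i] .
  have invariant: "actL sm X Y i (a *v u) m = actL sm X Y i u m" for u
  proof -
    have "sm \<mu> (actL sm X Y i u m) = actL sm X Y i (a *v u) (sm \<mu> m)"
      using is_H_moduleD(7)[OF H wdiag_mem_wreath[OF a] i, of u m] i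
      by (simp add: scalar[unfolded wdiag_def] wdiag_def)
    also have "\<dots> = sm \<mu> (actL sm X Y i (a *v u) m)"
      by (simp add: actL_def module_hom.scale[OF X] module_hom.scale[OF Y]
          V.scale_right_distrib mult.commute)
    finally show ?thesis using \<open>\<mu> \<noteq> 0\<close> by simp
  qed
  have "sm (a$1$1 - 1) (X i m) + sm (a$2$1) (Y i m) = 0"
    using invariant[of "vector [1, 0]"]
    by (simp add: actL_def mat2_mult_vec_entries V.scale_left_diff_distrib algebra_simps)
  moreover have "sm (a$1$2) (X i m) + sm (a$2$2 - 1) (Y i m) = 0"
    using invariant[of "vector [0, 1]"]
    by (simp add: actL_def mat2_mult_vec_entries V.scale_left_diff_distrib algebra_simps)
  moreover have "(a$1$1 - 1) * (a$2$2 - 1) - a$2$1 * a$1$2 \<noteq> 0"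
    using det_mat2_minus_one[OF det] tr by (simp add: det_2 mult.commute)
  ultimately show ?thesis by (rule V.eq_zero_if_det_nonzero)
qed

lemma (in finite_SL2_subgroup) central_wdiag_acts_by_scalar:
  assumes H: "is_H_module G N k c sm \<rho> X Y" and irr: "restriction_irreducible G N sm \<rho>"
    and a: "a \<in> G" and central: "\<And>h. h \<in> G \<Longrightarrow> a ** h = h ** a"
  obtains \<mu> where "\<mu> \<noteq> 0" "\<And>m. \<rho> (wdiag N a) m = sm \<mu> m"
proof -
  note z = wdiag_mem_wreath[OF a]
  obtain n where "n > 0" "mpow a n = mat 1" using finite_order a by blast
  then have "(\<rho> (wdiag N a) ^^ n) m = m" for m
    using rep_wdiag_mpow[OF H a, of n m] is_H_moduleD(3)[OF H] by (simp add: wdiag_one)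
  moreover have "\<rho> g (\<rho> (wdiag N a) m) = \<rho> (wdiag N a) (\<rho> g m)" if "g \<in> wreath G N" for g m
    using is_H_moduleD(4)[OF H that z] is_H_moduleD(4)[OF H z that] wdiag_central[OF central that]
    by metis
  ultimately show ?thesis
    using commuting_periodic_operator_is_scalar[OF irr is_H_moduleD(1,2)[OF H]
        is_H_moduleD(2)[OF H z] \<open>n > 0\<close>] that
    by blast
qed

theorem theorem4p1:
  fixes G :: "mat2 set" and N :: nat and k :: complex and c :: "mat2 \<Rightarrow> complex"
    and sm :: "complex \<Rightarrow> 'm::ab_group_add \<Rightarrow> 'm"
    and \<rho> :: "(nat \<Rightarrow> nat) \<times> (nat \<Rightarrow> mat2) \<Rightarrow> 'm \<Rightarrow> 'm"
    and X Y :: "nat \<Rightarrow> 'm \<Rightarrow> 'm"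
  assumes "finite_subgroup_SL2 G" and "G \<noteq> {mat 1}"
    and "class_function G c"
    and "is_H_module G N k c sm \<rho> X Y"
    and "restriction_irreducible G N sm \<rho>"
  shows "\<forall>i<N. \<forall>m. X i m = 0 \<and> Y i m = 0"
proof (intro allI impI)
  fix i m assume "i < N"
  interpret finite_SL2_subgroup G by standard fact
  obtain a where a: "a \<in> G" "a \<noteq> mat 1" and central: "\<And>h. h \<in> G \<Longrightarrow> a ** h = h ** a"
    using nontrivial_center \<open>G \<noteq> {mat 1}\<close> by blast
  obtain \<mu> where "\<mu> \<noteq> 0" "\<And>m. \<rho> (wdiag N a) m = sm \<mu> m"
    using central_wdiag_acts_by_scalar[OF assms(4,5) a(1) central] by blast
  then show "X i m = 0 \<and> Y i m = 0"
    using generators_vanish_if_wdiag_scalar[OF assms(4) \<open>i < N\<close> a(1) det_eq_1[OF a(1)] trace_ne_2[OF a]]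
    by blast
qed

end
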